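(* Let $(f_0, M_0, \Lambda_0, \mathcal{Q}_0)$ be a SIMDG with induced set $\mathcal{P}_0$ and training distribution $P_{\mathrm{tr}}$, and let $R$, $\gamma_0$ and the BCF $f_\star$ be as in the context. Then $f_\star$ is invariant, i.e. $P_{\mathrm{tr}}^{Y-f_\star(X)}=P^{Y-f_\star(X)}$ for all $P\in\mathcal{P}_0$. Moreover, with $f_{\mathrm{LS}}(x):=\mathrm{E}_{P_{\mathrm{tr}}}[Y\mid X=x]$ and $\mathcal{R}(P,f):=\mathrm{E}_P[(Y-f(X))^2]$, $$\mathcal{R}(P_{\mathrm{tr}}, f_\star)=\mathcal{R}(P_{\mathrm{tr}}, f_{\mathrm{LS}})+\mathrm{E}_{P_{\mathrm{tr}}}\Big[\big(\mathrm{E}_{P_{\mathrm{tr}}}[\gamma_0(V)\mid R^\top X]-\mathrm{E}_{P_{\mathrm{tr}}}[\gamma_0(V)\mid X]\big)^2\Big].$$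
   Context: Fix integers $p,r\ge 1$. A SIMDG is a tuple $(f_0, M_0, \Lambda_0, \mathcal{Q}_0)$ where $f_0:\mathbb{R}^p\to\mathbb{R}$ is measurable, $M_0\in\mathbb{R}^{p\times r}$, $\Lambda_0$ is a distribution on $\mathbb{R}^{1+p}$ such that $(U,V)\sim\Lambda_0$ satisfies $\mathrm{E}[(U,V)]=0$ and $\mathrm{E}[\|(U,V)\|_2^2]<\infty$, and $\mathcal{Q}_0$ is a set of distributions on $\mathbb{R}^r$. For each $Q\in\mathcal{Q}_0$ the model induces a distribution $P$ of $(U,V,X,Y,Z)$ by drawing $((U,V),Z)\sim\Lambda_0\otimes Q$ and setting $X = M_0 Z + V$, $Y = f_0(X)+U$; $\mathcal{P}_0$ is the set of all such induced distributions. Standing setting: $\sup_{P\in\mathcal{P}_0}\mathrm{E}_P[f_0(X)]^2<\infty$; $Q_{\mathrm{tr}}\in\mathcal{Q}_0$ satisfies $\mathrm{E}_{Q_{\mathrm{tr}}}[Z]=0$ and $\mathrm{E}_{Q_{\mathrm{tr}}}[ZZ^\top]\succ 0$; $P_{\mathrm{tr}}$ is the distribution induced by $Q_{\mathrm{tr}}$. $P^{W}$ denotes the distribution of $W$ under $P$. Let $q=\mathrm{rank}(M_0)$; if $q<p$, $R\in\mathbb{R}^{p\times(p-q)}$ has columns forming an orthonormal basis of $\ker(M_0^\top)$, and if $q=p$, $R$ is the zero vector in $\mathbb{R}^{p\times 1}$. $\gamma_0(v):=\mathrm{E}_{P_{\mathrm{tr}}}[U\mid V=v]$. The boosted control function is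 $f_\star(x):=f_0(x)+\mathrm{E}_{P_{\mathrm{tr}}}[\gamma_0(V)\mid R^\top X = R^\top x]$ (a fixed function, defined for $P_{\mathrm{tr}}$-a.e. $x$). *)

theory Defs
  imports "HOL-Analysis.Analysis" "HOL-Probability.Probability"
begin

type_synonym ('p, 'r) obs = "real \<times> (real^'p) \<times> (real^'p) \<times> real \<times> (real^'r)"

definition obsU :: "('p::finite, 'r::finite) obs \<Rightarrow> real" where
  "obsU w = (case w of (u, v, x, y, z) \<Rightarrow> u)"
definition obsV :: "('p::finite, 'r::finite) obs \<Rightarrow> real^'p" where
  "obsV w = (case w of (u, v, x, y, z) \<Rightarrow> v)"
definition obsX :: "('p::finite, 'r::finite) obs \<Rightarrow> real^'p" where
  "obsX w = (case w of (u, v, x, y, z) \<Rightarrow> x)"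
definition obsY :: "('p::finite, 'r::finite) obs \<Rightarrow> real" where
  "obsY w = (case w of (u, v, x, y, z) \<Rightarrow> y)"
definition obsZ :: "('p::finite, 'r::finite) obs \<Rightarrow> real^'r" where
  "obsZ w = (case w of (u, v, x, y, z) \<Rightarrow> z)"

text \<open>A SIMDG (f0, M0, Lambda0, Q0); M0 is a p x r matrix (rows indexed by 'p).\<close>
definition is_SIMDG ::
  "(real^'p \<Rightarrow> real) \<Rightarrow> real^'r^'p \<Rightarrow> (real \<times> (real^'p)) measure \<Rightarrow> (real^'r::finite) measure set \<Rightarrow> bool"
  where
  "is_SIMDG f0 M0 \<Lambda>0 \<Q>0 \<longleftrightarrow>
     f0 \<in> borel_measurable borel \<and>
     prob_space \<Lambda>0 \<and> sets \<Lambda>0 = sets borel \<and>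
     integrable \<Lambda>0 (\<lambda>w. w) \<and> integral\<^sup>L \<Lambda>0 (\<lambda>w. w) = 0 \<and>
     integrable \<Lambda>0 (\<lambda>w. (norm w)\<^sup>2) \<and>
     (\<forall>Q\<in>\<Q>0. prob_space Q \<and> sets Q = sets borel)"

definition simdg_induced ::
  "(real^'p \<Rightarrow> real) \<Rightarrow> real^'r^'p \<Rightarrow> (real \<times> (real^'p)) measure \<Rightarrow> (real^'r::finite) measure
     \<Rightarrow> ('p::finite, 'r) obs measure" where
  "simdg_induced f0 M0 \<Lambda>0 Q =
     distr (\<Lambda>0 \<Otimes>\<^sub>M Q) borel
       (\<lambda>((u, v), z). (u, v, M0 *v z + v, f0 (M0 *v z + v) + u, z))"

definition simdg_family ::
  "(real^'p \<Rightarrow> real) \<Rightarrow> real^'r^'p \<Rightarrow> (real \<times> (real^'p)) measure \<Rightarrow> (real^'r::finite) measure set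
     \<Rightarrow> ('p::finite, 'r) obs measure set" where
  "simdg_family f0 M0 \<Lambda>0 \<Q>0 = simdg_induced f0 M0 \<Lambda>0 ` \<Q>0"

definition sigma_rv :: "'a measure \<Rightarrow> ('a \<Rightarrow> 'b::topological_space) \<Rightarrow> 'a measure" where
  "sigma_rv M W = vimage_algebra (space M) W borel"

definition risk :: "('p::finite, 'r::finite) obs measure \<Rightarrow> (real^'p \<Rightarrow> real) \<Rightarrow> real" where
  "risk P f = integral\<^sup>L P (\<lambda>w. (obsY w - f (obsX w))\<^sup>2)"

end

theory Submission
  imports Defs
begin

text \<open>
  The columns of R span the kernel of M0^T, so R^T M0 = 0 and R^T X = R^T V. Hence
  Y - f_star(X) = U - g(R^T V) is a function of (U, V) alone, and its law under every induced
  distribution is an image of \<Lambda>0, whatever Q is.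

  For the risk identity, the independence of (U, V) and Z gives, for every fixed z,
  E[1_S(M0 z + V) (U - \<gamma>0(V))] = 0; integrating over z (Fubini) yields
  E[U | X] = E[\<gamma>0(V) | X]. So the least-squares residual is U - E[\<gamma>0(V) | X], while the
  control-function residual is U - E[\<gamma>0(V) | R^T X]. The latter conditional expectation is
  X-measurable, and Pythagoras for the projection onto \<sigma>(X) gives the decomposition.
\<close>

lemma transpose_mult_range_eq_0:
  fixes M :: "real^'n::finite^'m::finite" and R :: "real^'k::finite^'m"
  assumes "span (columns R) \<subseteq> {y. transpose M *v y = 0}"
  shows "transpose R *v (M *v z) = 0"
proof -
  have "(transpose R *v (M *v z)) $ j = 0" for j
  proof -
    have "column j R \<in> span (columns R)" by (auto simp: columns_def intro: span_base)
    then have "column j R v* M = 0" using assms by (auto simp: vector_transpose_matrix[symmetric])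
    then have "column j R \<bullet> (M *v z) = 0" by (metis dot_lmul_matrix inner_zero_left)
    then show ?thesis
      by (simp add: matrix_vector_mult_def column_def transpose_def inner_vec_def mult.commute)
  qed
  then show ?thesis by (simp add: vec_eq_iff)
qed

lemma (in prob_space) sigma_finite_subalgebra_sigma_rv:
  assumes "W \<in> borel_measurable M"
  shows "sigma_finite_subalgebra M (sigma_rv M W)"
proof (rule finite_measure_subalgebra_is_sigma_finite)
  show "finite_measure_subalgebra M (sigma_rv M W)"
    using sets_image_in_sets[OF refl assms]
    by (simp add: finite_measure_subalgebra_def finite_measure_subalgebra_axioms_def
        subalgebra_def finite_measure_axioms sigma_rv_def)
qed

lemma measurable_sigma_rv: "W \<in> measurable (sigma_rv M W) borel"
  unfolding sigma_rv_def by (rule measurable_vimage_algebra1) simp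

lemma subalgebra_sigma_rv_comp:
  assumes "\<phi> \<in> borel_measurable borel"
  shows "subalgebra (sigma_rv M W) (sigma_rv M (\<lambda>w. \<phi> (W w)))"
  unfolding subalgebra_def
proof
  show "space (sigma_rv M (\<lambda>w. \<phi> (W w))) = space (sigma_rv M W)" by (simp add: sigma_rv_def)
  have "(\<lambda>w. \<phi> (W w)) \<in> measurable (sigma_rv M W) borel"
    using measurable_compose[OF measurable_sigma_rv assms] .
  then show "sets (sigma_rv M (\<lambda>w. \<phi> (W w))) \<subseteq> sets (sigma_rv M W)"
    using sets_image_in_sets[of "sigma_rv M W" "space M"] by (simp add: sigma_rv_def)
qed

lemma integrable_mult_if_square_integrable:
  fixes f g :: "'a \<Rightarrow> real"
  assumes [measurable]: "f \<in> borel_measurable M" "g \<in> borel_measurable M"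
    and "integrable M (\<lambda>x. (f x)\<^sup>2)" "integrable M (\<lambda>x. (g x)\<^sup>2)"
  shows "integrable M (\<lambda>x. f x * g x)"
proof (rule Bochner_Integration.integrable_bound)
  have "\<bar>a * b\<bar> \<le> a\<^sup>2 + b\<^sup>2" for a b :: real
  proof -
    have "2 * (\<bar>a\<bar> * \<bar>b\<bar>) \<le> a\<^sup>2 + b\<^sup>2"
      using sum_squares_bound[of "\<bar>a\<bar>" "\<bar>b\<bar>"] by (simp add: mult.assoc)
    then show ?thesis
      unfolding abs_mult using mult_nonneg_nonneg[OF abs_ge_zero abs_ge_zero, of a b] by linarith
  qed
  then show "AE x in M. norm (f x * g x) \<le> norm ((f x)\<^sup>2 + (g x)\<^sup>2)"
    by (intro AE_I2) simp
  show "integrable M (\<lambda>x. (f x)\<^sup>2 + (g x)\<^sup>2)" using assms(3,4) by simp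
qed simp

lemma square_integrable_diff:
  fixes f g :: "'a \<Rightarrow> real"
  assumes [measurable]: "f \<in> borel_measurable M" "g \<in> borel_measurable M"
    and "integrable M (\<lambda>x. (f x)\<^sup>2)" "integrable M (\<lambda>x. (g x)\<^sup>2)"
  shows "integrable M (\<lambda>x. (f x - g x)\<^sup>2)"
proof -
  have "(\<lambda>x. (f x - g x)\<^sup>2) = (\<lambda>x. (f x)\<^sup>2 - 2 * (f x * g x) + (g x)\<^sup>2)"
    by (simp add: fun_eq_iff power2_diff)
  then show ?thesis
    using integrable_mult_if_square_integrable[OF assms] assms(3,4) by simp
qed

lemma (in sigma_finite_subalgebra) square_integrable_real_cond_exp:
  fixes f :: "'a \<Rightarrow> real"
  assumes "finite_measure M" "f \<in> borel_measurable M" "integrable M (\<lambda>x. (f x)\<^sup>2)"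
  shows "integrable M (\<lambda>x. (real_cond_exp M F f x)\<^sup>2)"
proof (rule integrable_convex_cond_exp[where I=UNIV])
  show "integrable M f"
    using assms finite_measure.square_integrable_imp_integrable by blast
qed (use assms convex_power2 in auto)

lemma (in sigma_finite_subalgebra) real_cond_exp_eq_if_set_integrals_eq:
  assumes "integrable M f" "integrable M g"
    and "\<And>A. A \<in> sets F \<Longrightarrow>
      (\<integral>x\<in>A. f x \<partial>M) = (\<integral>x\<in>A. g x \<partial>M)"
  shows "AE x in M. real_cond_exp M F f x = real_cond_exp M F g x"
proof (rule real_cond_exp_charact)
  fix A assume "A \<in> sets F"
  then show "(\<integral>x\<in>A. f x \<partial>M) = (\<integral>x\<in>A. real_cond_exp M F g x \<partial>M)"
    using assms(3) real_cond_exp_intA[OF assms(2)] by simp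
qed (use assms in auto)

lemma (in sigma_finite_subalgebra) real_cond_exp_pythagoras:
  fixes f h :: "'a \<Rightarrow> real"
  assumes "finite_measure M"
    and [measurable]: "f \<in> borel_measurable M" "h \<in> borel_measurable F"
    and f2: "integrable M (\<lambda>x. (f x)\<^sup>2)" and h2: "integrable M (\<lambda>x. (h x)\<^sup>2)"
  defines "E \<equiv> real_cond_exp M F f"
  shows "(\<integral>x. (f x - h x)\<^sup>2 \<partial>M) =
    (\<integral>x. (f x - E x)\<^sup>2 \<partial>M) + (\<integral>x. (h x - E x)\<^sup>2 \<partial>M)"
proof -
  have [measurable]: "h \<in> borel_measurable M" "E \<in> borel_measurable M" "E \<in> borel_measurable F"
    using measurable_from_subalg[OF subalg \<open>h \<in> borel_measurable F\<close>] by (auto simp: E_def)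
  have E2: "integrable M (\<lambda>x. (E x)\<^sup>2)"
    unfolding E_def by (rule square_integrable_real_cond_exp[OF assms(1-2) f2])
  have D2: "integrable M (\<lambda>x. (h x - E x)\<^sup>2)" by (rule square_integrable_diff) (use h2 E2 in auto)
  have Df: "integrable M (\<lambda>x. (h x - E x) * f x)"
    by (rule integrable_mult_if_square_integrable) (use D2 f2 in auto)
  have DE: "integrable M (\<lambda>x. (h x - E x) * E x)"
    by (rule integrable_mult_if_square_integrable) (use D2 E2 in auto)
  have orth: "(\<integral>x. (h x - E x) * f x \<partial>M) = (\<integral>x. (h x - E x) * E x \<partial>M)"
    unfolding E_def by (rule real_cond_exp_intg(2)[symmetric]) (use Df E_def in auto)
  have fE2: "integrable M (\<lambda>x. (f x - E x)\<^sup>2)" by (rule square_integrable_diff) (use f2 E2 in auto)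
  have "(\<integral>x. (f x - h x)\<^sup>2 \<partial>M) = (\<integral>x. (f x - E x)\<^sup>2 + (h x - E x)\<^sup>2
          - 2 * ((h x - E x) * f x) + 2 * ((h x - E x) * E x) \<partial>M)"
    by (rule Bochner_Integration.integral_cong) (auto simp: power2_eq_square algebra_simps)
  also have "\<dots> = (\<integral>x. (f x - E x)\<^sup>2 \<partial>M) + (\<integral>x. (h x - E x)\<^sup>2 \<partial>M)"
    using fE2 D2 Df DE orth by simp
  finally show ?thesis .
qed

lemma integrable_indicator_comp_mult:
  fixes f :: "'a \<Rightarrow> real"
  assumes "integrable M f" and [measurable]: "h \<in> measurable M N" "S \<in> sets N"
  shows "integrable M (\<lambda>x. indicator S (h x) * f x)"
proof (rule Bochner_Integration.integrable_bound[OF assms(1)])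
  have [measurable]: "f \<in> borel_measurable M" using assms(1) by (rule borel_measurable_integrable)
  show "(\<lambda>x. indicator S (h x) * f x) \<in> borel_measurable M" by measurable
  show "AE x in M. norm (indicator S (h x) * f x) \<le> norm (f x)" by (intro AE_I2) (simp add: indicator_def)
qed

lemma measurable_matrix_vector_mult [measurable]:
  "(\<lambda>z. (M::real^'n::finite^'m::finite) *v z) \<in> borel_measurable borel"
  by (intro borel_measurable_continuous_onI matrix_vector_mult_linear_continuous_on)

lemma sets_borel_obs:
  "sets (borel :: ('p::finite, 'r::finite) obs measure) =
     sets (borel \<Otimes>\<^sub>M (borel \<Otimes>\<^sub>M (borel \<Otimes>\<^sub>M (borel \<Otimes>\<^sub>M borel))))"
  by (simp only: borel_prod)

lemma obs_measurable [measurable]: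
  "(obsU :: ('p::finite, 'r::finite) obs \<Rightarrow> _) \<in> borel_measurable borel"
  "(obsV :: ('p, 'r) obs \<Rightarrow> _) \<in> borel_measurable borel"
  "(obsX :: ('p, 'r) obs \<Rightarrow> _) \<in> borel_measurable borel"
  "(obsY :: ('p, 'r) obs \<Rightarrow> _) \<in> borel_measurable borel"
proof -
  have eqs: "obsU = fst" "obsV = (\<lambda>w. fst (snd w))" "obsX = (\<lambda>w. fst (snd (snd w)))"
    "obsY = (\<lambda>w. fst (snd (snd (snd w))))"
    by (auto simp: obsU_def obsV_def obsX_def obsY_def fun_eq_iff split: prod.splits)
  show "(obsU :: ('p, 'r) obs \<Rightarrow> _) \<in> borel_measurable borel"
    "(obsV :: ('p, 'r) obs \<Rightarrow> _) \<in> borel_measurable borel"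
    "(obsX :: ('p, 'r) obs \<Rightarrow> _) \<in> borel_measurable borel"
    "(obsY :: ('p, 'r) obs \<Rightarrow> _) \<in> borel_measurable borel"
    unfolding eqs measurable_cong_sets[OF sets_borel_obs refl] by simp_all
qed

definition simdg_map ::
  "(real^'p \<Rightarrow> real) \<Rightarrow> real^'r^'p \<Rightarrow>
    (real \<times> (real^'p)) \<times> (real^'r) \<Rightarrow> ('p::finite, 'r::finite) obs"
  where "simdg_map f0 M0 = (\<lambda>((u, v), z). (u, v, M0 *v z + v, f0 (M0 *v z + v) + u, z))"

lemma simdg_induced_eq_distr_simdg_map:
  "simdg_induced f0 M0 \<Lambda> Q = distr (\<Lambda> \<Otimes>\<^sub>M Q) borel (simdg_map f0 M0)"
  unfolding simdg_induced_def simdg_map_def ..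

lemma obs_simdg_map [simp]:
  "obsU (simdg_map f0 M0 x) = fst (fst x)"
  "obsV (simdg_map f0 M0 x) = snd (fst x)"
  "obsX (simdg_map f0 M0 x) = M0 *v snd x + snd (fst x)"
  "obsY (simdg_map f0 M0 x) = f0 (M0 *v snd x + snd (fst x)) + fst (fst x)"
  by (simp_all add: simdg_map_def obsU_def obsV_def obsX_def obsY_def split: prod.splits)

locale simdg_model = pair_prob_space \<Lambda> Q
  for \<Lambda> :: "(real \<times> (real^'p::finite)) measure" and Q :: "(real^'r::finite) measure" +
  fixes f0 :: "real^'p \<Rightarrow> real" and M0 :: "real^'r^'p"
  assumes measurable_f0 [measurable]: "f0 \<in> borel_measurable borel"
    and sets_Lambda: "sets \<Lambda> = sets borel"
    and sets_Q [measurable_cong]: "sets Q = sets borel"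
begin

abbreviation P :: "('p, 'r) obs measure" where "P \<equiv> simdg_induced f0 M0 \<Lambda> Q"

lemma sets_Lambda_pair [measurable_cong]: "sets \<Lambda> = sets (borel \<Otimes>\<^sub>M borel)"
  unfolding borel_prod by (rule sets_Lambda)

lemma measurable_simdg_map [measurable]: "simdg_map f0 M0 \<in> measurable (\<Lambda> \<Otimes>\<^sub>M Q) borel"
  unfolding measurable_cong_sets[OF refl sets_borel_obs] simdg_map_def case_prod_beta' by measurable

lemma sets_P [measurable_cong]: "sets P = sets borel"
  by (simp add: simdg_induced_def)

lemma space_P [simp]: "space P = UNIV"
  by (simp add: simdg_induced_def)

sublocale induced: prob_space P
  unfolding simdg_induced_eq_distr_simdg_map by (rule prob_space_distr) measurable

lemma distr_P_noise: "distr P \<Lambda> (\<lambda>w. (obsU w, obsV w)) = \<Lambda>"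
proof -
  let ?UV = "\<lambda>w. (obsU w, obsV w)"
  have "distr P \<Lambda> ?UV = distr (\<Lambda> \<Otimes>\<^sub>M Q) \<Lambda> (?UV \<circ> simdg_map f0 M0)"
    unfolding simdg_induced_eq_distr_simdg_map by (rule distr_distr) measurable
  also have "?UV \<circ> simdg_map f0 M0 = fst"
    by (auto simp: fun_eq_iff)
  finally show ?thesis by (simp add: M2.distr_pair_fst)
qed

lemma AE_P_obsY: "AE w in P. obsY w = f0 (obsX w) + obsU w"
  unfolding simdg_induced_eq_distr_simdg_map
  by (subst AE_distr_iff) (auto intro!: AE_I2)

lemma distr_residual_eq_if_range_invariant:
  assumes [measurable]: "h \<in> borel_measurable borel"
    and invariant: "\<And>z v. h (M0 *v z + v) = h v"
  shows "distr P borel (\<lambda>w. obsY w - (f0 (obsX w) + h (obsX w))) = distr \<Lambda> borel (\<lambda>(u, v). u - h v)"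
proof -
  let ?res = "\<lambda>w. obsY w - (f0 (obsX w) + h (obsX w))"
  have "distr P borel ?res = distr (\<Lambda> \<Otimes>\<^sub>M Q) borel (?res \<circ> simdg_map f0 M0)"
    unfolding simdg_induced_eq_distr_simdg_map by (rule distr_distr) measurable
  also have "?res \<circ> simdg_map f0 M0 = (\<lambda>(u, v). u - h v) \<circ> fst"
    by (auto simp: fun_eq_iff invariant)
  also have "distr (\<Lambda> \<Otimes>\<^sub>M Q) borel \<dots> = distr (distr (\<Lambda> \<Otimes>\<^sub>M Q) \<Lambda> fst) borel (\<lambda>(u, v). u - h v)"
    by (rule distr_distr[symmetric]) measurable
  finally show ?thesis by (simp add: M2.distr_pair_fst)
qed

lemma integral_P_noise:
  fixes k :: "real \<times> (real^'p) \<Rightarrow> real"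
  assumes "k \<in> borel_measurable \<Lambda>"
  shows "(\<integral>w. k (obsU w, obsV w) \<partial>P) = integral\<^sup>L \<Lambda> k"
    and "integrable P (\<lambda>w. k (obsU w, obsV w)) \<longleftrightarrow> integrable \<Lambda> k"
proof -
  have UV: "(\<lambda>w. (obsU w, obsV w)) \<in> measurable P \<Lambda>" by measurable
  show "(\<integral>w. k (obsU w, obsV w) \<partial>P) = integral\<^sup>L \<Lambda> k"
    and "integrable P (\<lambda>w. k (obsU w, obsV w)) \<longleftrightarrow> integrable \<Lambda> k"
    using integral_distr[OF UV assms] integrable_distr_eq[OF UV assms] distr_P_noise by simp_all
qed

lemma square_integrable_obsU:
  assumes "integrable \<Lambda> (\<lambda>w. (norm w)\<^sup>2)"
  shows "integrable P (\<lambda>w. (obsU w)\<^sup>2)"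
proof -
  have "integrable \<Lambda> (\<lambda>w. (fst w)\<^sup>2)"
    by (rule Bochner_Integration.integrable_bound[OF assms]) (auto simp: norm_Pair)
  then show ?thesis using integral_P_noise(2)[of "\<lambda>w. (fst w)\<^sup>2"] by simp
qed

context
  fixes \<gamma> :: "real^'p \<Rightarrow> real"
  assumes measurable_gamma [measurable]: "\<gamma> \<in> borel_measurable borel"
    and gamma_version: "AE w in P. \<gamma> (obsV w) = real_cond_exp P (sigma_rv P obsV) obsU w"
    and integrable_obsU: "integrable P obsU"
begin

interpretation FV: sigma_finite_subalgebra P "sigma_rv P obsV"
  by (rule induced.sigma_finite_subalgebra_sigma_rv) measurable

interpretation FX: sigma_finite_subalgebra P "sigma_rv P obsX"
  by (rule induced.sigma_finite_subalgebra_sigma_rv) measurable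

lemma integrable_gamma: "integrable P (\<lambda>w. \<gamma> (obsV w))"
proof (rule integrable_cong_AE_imp[OF FV.real_cond_exp_int(1)[OF integrable_obsU]])
  show "AE w in P. real_cond_exp P (sigma_rv P obsV) obsU w = \<gamma> (obsV w)"
    using gamma_version by auto
qed measurable

lemma integral_noise_residual_indicator:
  assumes [measurable]: "S \<in> sets borel"
  shows "(\<integral>uv. indicator S (snd uv) * (fst uv - \<gamma> (snd uv)) \<partial>\<Lambda>) = 0"
proof -
  have iU: "integrable P (\<lambda>w. indicator S (obsV w) * obsU w)"
    by (rule integrable_indicator_comp_mult[OF integrable_obsU]) measurable
  have iG: "integrable P (\<lambda>w. indicator S (obsV w) * \<gamma> (obsV w))"
    by (rule integrable_indicator_comp_mult[OF integrable_gamma]) measurable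
  have "(\<lambda>w. indicator S (obsV w)) \<in> borel_measurable (sigma_rv P obsV)"
    using measurable_compose[OF measurable_sigma_rv borel_measurable_indicator[OF assms]] .
  then have "(\<integral>w. indicator S (obsV w) * obsU w \<partial>P)
      = (\<integral>w. indicator S (obsV w) * real_cond_exp P (sigma_rv P obsV) obsU w \<partial>P)"
    by (rule FV.real_cond_exp_intg(2)[symmetric, OF iU]) measurable
  also have "\<dots> = (\<integral>w. indicator S (obsV w) * \<gamma> (obsV w) \<partial>P)"
    by (rule integral_cong_AE) (use gamma_version in auto)
  finally have "(\<integral>w. indicator S (obsV w) * (obsU w - \<gamma> (obsV w)) \<partial>P) = 0"
    using iU iG by (simp add: right_diff_distrib)
  then show ?thesis
    using integral_P_noise(1)[of "\<lambda>uv. indicator S (snd uv) * (fst uv - \<gamma> (snd uv))"] by simp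
qed

lemma integral_obsX_indicator_residual:
  assumes [measurable]: "S \<in> sets borel"
  shows "(\<integral>w. indicator S (obsX w) * (obsU w - \<gamma> (obsV w)) \<partial>P) = 0"
proof -
  define \<phi> :: "('p, 'r) obs \<Rightarrow> real"
    where "\<phi> = (\<lambda>w. indicator S (obsX w) * (obsU w - \<gamma> (obsV w)))"
  have [measurable]: "\<phi> \<in> borel_measurable borel" unfolding \<phi>_def by measurable
  have "integrable P \<phi>"
    unfolding \<phi>_def using integrable_obsU integrable_gamma
    by (intro integrable_indicator_comp_mult Bochner_Integration.integrable_diff) measurable
  then have int: "integrable (\<Lambda> \<Otimes>\<^sub>M Q) (\<lambda>(uv, z). \<phi> (simdg_map f0 M0 (uv, z)))"
    unfolding simdg_induced_eq_distr_simdg_map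
    by (subst (asm) integrable_distr_eq) (auto simp: case_prod_beta')
  \<comment> \<open>for fixed z, this is the orthogonality above for the shifted set S - M0 z\<close>
  have "(\<integral>uv. \<phi> (simdg_map f0 M0 (uv, z)) \<partial>\<Lambda>) = 0" for z
  proof -
    have [measurable]: "(\<lambda>v. M0 *v z + v) -` S \<in> sets borel" by (rule measurable_sets_borel) measurable
    show ?thesis
      using integral_noise_residual_indicator[of "(\<lambda>v. M0 *v z + v) -` S"]
      by (simp add: \<phi>_def indicator_vimage)
  qed
  moreover have "integral\<^sup>L P \<phi> = (\<integral>z. (\<integral>uv. \<phi> (simdg_map f0 M0 (uv, z)) \<partial>\<Lambda>) \<partial>Q)"
    unfolding simdg_induced_eq_distr_simdg_map integral_snd[OF int]
    by (subst integral_distr) (auto simp: case_prod_beta')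
  ultimately show ?thesis unfolding \<phi>_def by simp
qed

lemma real_cond_exp_obsU_obsX:
  "AE w in P. real_cond_exp P (sigma_rv P obsX) obsU w
     = real_cond_exp P (sigma_rv P obsX) (\<lambda>w. \<gamma> (obsV w)) w"
proof (rule FX.real_cond_exp_eq_if_set_integrals_eq[OF integrable_obsU integrable_gamma])
  fix A assume "A \<in> sets (sigma_rv P obsX)"
  then obtain S where [measurable]: "S \<in> sets borel" and A: "A = obsX -` S"
    by (auto simp: sigma_rv_def sets_vimage_algebra2)
  have "integrable P (\<lambda>w. indicator S (obsX w) * obsU w)"
    by (rule integrable_indicator_comp_mult[OF integrable_obsU]) measurable
  moreover have "integrable P (\<lambda>w. indicator S (obsX w) * \<gamma> (obsV w))"
    by (rule integrable_indicator_comp_mult[OF integrable_gamma]) measurable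
  ultimately show "(\<integral>w\<in>A. obsU w \<partial>P) = (\<integral>w\<in>A. \<gamma> (obsV w) \<partial>P)"
    using integral_obsX_indicator_residual[of S]
    by (simp add: A set_lebesgue_integral_def indicator_vimage right_diff_distrib)
qed

lemma real_cond_exp_obsY_obsX:
  assumes "integrable P (\<lambda>w. f0 (obsX w))"
  shows "AE w in P. real_cond_exp P (sigma_rv P obsX) obsY w
     = f0 (obsX w) + real_cond_exp P (sigma_rv P obsX) (\<lambda>w. \<gamma> (obsV w)) w"
proof -
  have "AE w in P. real_cond_exp P (sigma_rv P obsX) obsY w
      = real_cond_exp P (sigma_rv P obsX) (\<lambda>w. f0 (obsX w) + obsU w) w"
    by (rule FX.real_cond_exp_cong[OF AE_P_obsY]) measurable
  moreover have "AE w in P. real_cond_exp P (sigma_rv P obsX) (\<lambda>w. f0 (obsX w) + obsU w) w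
      = real_cond_exp P (sigma_rv P obsX) (\<lambda>w. f0 (obsX w)) w + real_cond_exp P (sigma_rv P obsX) obsU w"
    by (rule FX.real_cond_exp_add[OF assms integrable_obsU])
  moreover have "AE w in P. real_cond_exp P (sigma_rv P obsX) (\<lambda>w. f0 (obsX w)) w = f0 (obsX w)"
    by (rule FX.real_cond_exp_F_meas[OF assms measurable_compose[OF measurable_sigma_rv measurable_f0]])
  ultimately show ?thesis
    using real_cond_exp_obsU_obsX by eventually_elim simp
qed

lemma risk_control_function_decomposition:
  fixes \<phi> :: "real^'p \<Rightarrow> 'b::topological_space" and g :: "'b \<Rightarrow> real"
    and fLS :: "real^'p \<Rightarrow> real"
  assumes U2: "integrable P (\<lambda>w. (obsU w)\<^sup>2)"
    and f0X: "integrable P (\<lambda>w. f0 (obsX w))"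
    and [measurable]: "\<phi> \<in> borel_measurable borel" "g \<in> borel_measurable borel"
    and g_version: "AE w in P. g (\<phi> (obsX w))
      = real_cond_exp P (sigma_rv P (\<lambda>w. \<phi> (obsX w))) (\<lambda>w. \<gamma> (obsV w)) w"
    and [measurable]: "fLS \<in> borel_measurable borel"
    and fLS_version: "AE w in P. fLS (obsX w) = real_cond_exp P (sigma_rv P obsX) obsY w"
  shows "risk P (\<lambda>x. f0 x + g (\<phi> x)) = risk P fLS +
    (\<integral>w. (real_cond_exp P (sigma_rv P (\<lambda>w. \<phi> (obsX w))) (\<lambda>w. \<gamma> (obsV w)) w
          - real_cond_exp P (sigma_rv P obsX) (\<lambda>w. \<gamma> (obsV w)) w)\<^sup>2 \<partial>P)"
proof -
  interpret F\<phi>: sigma_finite_subalgebra P "sigma_rv P (\<lambda>w. \<phi> (obsX w))"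
    by (rule induced.sigma_finite_subalgebra_sigma_rv) measurable
  define A where "A = real_cond_exp P (sigma_rv P (\<lambda>w. \<phi> (obsX w))) (\<lambda>w. \<gamma> (obsV w))"
  define B where "B = real_cond_exp P (sigma_rv P obsX) (\<lambda>w. \<gamma> (obsV w))"
  have A_X: "A \<in> borel_measurable (sigma_rv P obsX)"
    unfolding A_def by (rule measurable_from_subalg[OF subalgebra_sigma_rv_comp borel_measurable_cond_exp]) simp
  have [measurable]: "A \<in> borel_measurable P" "B \<in> borel_measurable P"
    unfolding A_def B_def by (rule borel_measurable_cond_exp2)+
  have "integrable P (\<lambda>w. (real_cond_exp P (sigma_rv P obsV) obsU w)\<^sup>2)"
    by (rule FV.square_integrable_real_cond_exp[OF _ _ U2]) (simp_all add: induced.finite_measure_axioms)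
  then have G2: "integrable P (\<lambda>w. (\<gamma> (obsV w))\<^sup>2)"
    by (rule integrable_cong_AE_imp) (use gamma_version in auto)
  have A2: "integrable P (\<lambda>w. (A w)\<^sup>2)"
    unfolding A_def by (rule F\<phi>.square_integrable_real_cond_exp[OF _ _ G2])
      (simp_all add: induced.finite_measure_axioms)
  have B: "AE w in P. real_cond_exp P (sigma_rv P obsX) obsU w = B w"
    using real_cond_exp_obsU_obsX by (simp add: B_def)
  have "risk P (\<lambda>x. f0 x + g (\<phi> x)) = (\<integral>w. (obsU w - A w)\<^sup>2 \<partial>P)"
    unfolding risk_def by (rule integral_cong_AE) (use AE_P_obsY g_version in \<open>auto simp: A_def\<close>)
  also have "\<dots> = (\<integral>w. (obsU w - real_cond_exp P (sigma_rv P obsX) obsU w)\<^sup>2 \<partial>P)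
      + (\<integral>w. (A w - real_cond_exp P (sigma_rv P obsX) obsU w)\<^sup>2 \<partial>P)"
    by (rule FX.real_cond_exp_pythagoras[OF _ _ A_X U2 A2]) (simp_all add: induced.finite_measure_axioms)
  also have "\<dots> = (\<integral>w. (obsU w - B w)\<^sup>2 \<partial>P) + (\<integral>w. (A w - B w)\<^sup>2 \<partial>P)"
    using B by (intro arg_cong2[where f="(+)"] integral_cong_AE) auto
  also have "(\<integral>w. (obsU w - B w)\<^sup>2 \<partial>P) = risk P fLS"
    unfolding risk_def by (rule integral_cong_AE)
      (use AE_P_obsY fLS_version real_cond_exp_obsY_obsX[OF f0X] in \<open>auto simp: B_def\<close>)
  finally show ?thesis by (simp add: A_def B_def)
qed

end

end

lemma simdg_model_if_is_SIMDG:
  assumes "is_SIMDG f0 M0 \<Lambda> \<Q>" "Q \<in> \<Q>"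
  shows "simdg_model \<Lambda> Q f0"
proof -
  interpret \<Lambda>: prob_space \<Lambda> using assms(1) by (simp add: is_SIMDG_def)
  interpret Q: prob_space Q using assms by (simp add: is_SIMDG_def)
  interpret pair_prob_space \<Lambda> Q ..
  show ?thesis using assms by unfold_locales (simp_all add: is_SIMDG_def)
qed

lemma distr_control_function_residual:
  assumes "is_SIMDG f0 M0 \<Lambda> \<Q>" "Q \<in> \<Q>" "g \<in> borel_measurable borel"
    and R_M0: "\<And>z. transpose R *v (M0 *v z) = 0"
  shows "distr (simdg_induced f0 M0 \<Lambda> Q) borel (\<lambda>w. obsY w - (f0 (obsX w) + g (transpose R *v obsX w)))
    = distr \<Lambda> borel (\<lambda>(u, v). u - g (transpose R *v v))"
proof (rule simdg_model.distr_residual_eq_if_range_invariant[OF simdg_model_if_is_SIMDG[OF assms(1,2)]])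
  show "(\<lambda>x. g (transpose R *v x)) \<in> borel_measurable borel" using assms(3) by measurable
  show "g (transpose R *v (M0 *v z + v)) = g (transpose R *v v)" for z v
    by (simp only: matrix_vector_right_distrib R_M0 add_0_left)
qed

theorem proposition4:
  fixes f0 :: "real^'p::finite \<Rightarrow> real"
    and M0 :: "real^'r::finite^'p"
    and \<Lambda>0 :: "(real \<times> (real^'p)) measure"
    and \<Q>0 :: "(real^'r) measure set"
    and Qtr :: "(real^'r) measure"
    and Ptr :: "('p, 'r) obs measure"
    and R :: "real^'k::finite^'p"
    and \<gamma>0 :: "real^'p \<Rightarrow> real"
    and g :: "real^'k \<Rightarrow> real"
    and fstar :: "real^'p \<Rightarrow> real"
    and fLS :: "real^'p \<Rightarrow> real"
  assumes simdg: "is_SIMDG f0 M0 \<Lambda>0 \<Q>0"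
    and bounded: "\<exists>C. \<forall>P\<in>simdg_family f0 M0 \<Lambda>0 \<Q>0.
                    integrable P (\<lambda>w. (f0 (obsX w))\<^sup>2) \<and> integral\<^sup>L P (\<lambda>w. (f0 (obsX w))\<^sup>2) \<le> C"
    and Qtr_in: "Qtr \<in> \<Q>0"
    and Qtr_mean: "integrable Qtr (\<lambda>z. z)" "integral\<^sup>L Qtr (\<lambda>z. z) = 0"
    and Qtr_second: "\<forall>i j. integrable Qtr (\<lambda>z. z $ i * z $ j)"
    and Qtr_pd: "\<forall>a::real^'r. a \<noteq> 0 \<longrightarrow>
                   a \<bullet> ((\<chi> i j. integral\<^sup>L Qtr (\<lambda>z. z $ i * z $ j)) *v a) > 0"
    and Ptr_def: "Ptr = simdg_induced f0 M0 \<Lambda>0 Qtr"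
    and R_def: "if rank M0 < CARD('p) then
                  CARD('k) = CARD('p) - rank M0 \<and>
                  (\<forall>i j. column i R \<bullet> column j R = (if i = j then 1 else 0)) \<and>
                  span (columns R) = {y. transpose M0 *v y = 0}
                else CARD('k) = 1 \<and> R = 0"
    and gamma0: "\<gamma>0 \<in> borel_measurable borel"
                "AE w in Ptr. \<gamma>0 (obsV w) = real_cond_exp Ptr (sigma_rv Ptr obsV) obsU w"
    and g_version: "g \<in> borel_measurable borel"
                "AE w in Ptr. g (transpose R *v obsX w) =
                   real_cond_exp Ptr (sigma_rv Ptr (\<lambda>w. transpose R *v obsX w)) (\<lambda>w. \<gamma>0 (obsV w)) w"
    and fstar_def: "fstar = (\<lambda>x. f0 x + g (transpose R *v x))"
    and fLS_version: "fLS \<in> borel_measurable borel"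
                "AE w in Ptr. fLS (obsX w) = real_cond_exp Ptr (sigma_rv Ptr obsX) obsY w"
  shows "(\<forall>P\<in>simdg_family f0 M0 \<Lambda>0 \<Q>0.
            distr Ptr borel (\<lambda>w. obsY w - fstar (obsX w)) = distr P borel (\<lambda>w. obsY w - fstar (obsX w)))
         \<and> risk Ptr fstar =
             risk Ptr fLS +
             integral\<^sup>L Ptr (\<lambda>w.
               (real_cond_exp Ptr (sigma_rv Ptr (\<lambda>w. transpose R *v obsX w)) (\<lambda>w. \<gamma>0 (obsV w)) w
                - real_cond_exp Ptr (sigma_rv Ptr obsX) (\<lambda>w. \<gamma>0 (obsV w)) w)\<^sup>2)"
proof -
  have R_M0: "transpose R *v (M0 *v z) = 0" for z
  proof (rule transpose_mult_range_eq_0)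
    show "span (columns R) \<subseteq> {y. transpose M0 *v y = 0}"
    proof (cases "rank M0 < CARD('p)")
      case False
      with R_def have "columns R = {0}" by (auto simp: columns_def column_def vec_eq_iff)
      then show ?thesis by simp
    qed (use R_def in simp)
  qed
  have residual: "distr (simdg_induced f0 M0 \<Lambda>0 Q) borel (\<lambda>w. obsY w - fstar (obsX w))
      = distr \<Lambda>0 borel (\<lambda>(u, v). u - g (transpose R *v v))" if "Q \<in> \<Q>0" for Q
    unfolding fstar_def by (rule distr_control_function_residual[OF simdg that g_version(1) R_M0])
  interpret tr: simdg_model \<Lambda>0 Qtr f0 M0 by (rule simdg_model_if_is_SIMDG[OF simdg Qtr_in])
  have U2: "integrable tr.P (\<lambda>w. (obsU w)\<^sup>2)"
    by (rule tr.square_integrable_obsU) (use simdg in \<open>simp add: is_SIMDG_def\<close>)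
  have U1: "integrable tr.P obsU"
    by (rule tr.induced.square_integrable_imp_integrable[OF _ U2]) measurable
  have f0X: "integrable tr.P (\<lambda>w. f0 (obsX w))"
  proof (rule tr.induced.square_integrable_imp_integrable)
    have "tr.P \<in> simdg_family f0 M0 \<Lambda>0 \<Q>0" using Qtr_in by (simp add: simdg_family_def)
    then show "integrable tr.P (\<lambda>w. (f0 (obsX w))\<^sup>2)" using bounded by blast
  qed measurable
  show ?thesis
    using residual Qtr_in tr.risk_control_function_decomposition[OF gamma0[unfolded Ptr_def] U1 U2 f0X
        measurable_matrix_vector_mult g_version[unfolded Ptr_def] fLS_version[unfolded Ptr_def]]
    unfolding Ptr_def fstar_def simdg_family_def by auto
qed

end
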